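(* Let $n\neq 1$ be a real number, $k_n=n-1$, and $k_0,k_1,k_2\in\mathbb{R}$. On the phase space with canonical coordinates $(r,\phi,p_r,p_\phi)$, $r>0$, consider $$H_{na}'=\tfrac12 r^{2n}\Big(p_r^2+\tfrac{p_\phi^2}{r^2}\Big)+\frac{k_0}{r^{2k_n}}+\frac{1}{r^{k_n}}\big(k_1\cos(k_n\phi)+k_2\sin(k_n\phi)\big).$$ With $P_1=r^n\big(p_r\cos(k_n\phi)+\tfrac1r p_\phi\sin(k_n\phi)\big)$ and $P_2=r^n\big(p_r\sin(k_n\phi)-\tfrac1r p_\phi\cos(k_n\phi)\big)$, the function $$J_{a3}'=2k_0p_\phi+k_2P_1-k_1P_2,$$ which is linear in the momenta, is a constant of motion of $H_{na}'$, i.e. $\{J_{a3}',H_{na}'\}=0$.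
   Context: The Poisson bracket is the canonical one in $(r,\phi,p_r,p_\phi)$. A constant of motion of $H$ is a function $F$ with $\{F,H\}=0$. *)

theory Defs
  imports "HOL-Analysis.Analysis"
begin

type_synonym phase_fun = "real \<Rightarrow> real \<Rightarrow> real \<Rightarrow> real \<Rightarrow> real"
  (* arguments in the order r, phi, p_r, p_phi *)

definition pd_r :: "phase_fun \<Rightarrow> phase_fun" where
  "pd_r F r ph pr pph = deriv (\<lambda>x. F x ph pr pph) r"
definition pd_phi :: "phase_fun \<Rightarrow> phase_fun" where
  "pd_phi F r ph pr pph = deriv (\<lambda>x. F r x pr pph) ph"
definition pd_pr :: "phase_fun \<Rightarrow> phase_fun" where
  "pd_pr F r ph pr pph = deriv (\<lambda>x. F r ph x pph) pr"
definition pd_pphi :: "phase_fun \<Rightarrow> phase_fun" where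
  "pd_pphi F r ph pr pph = deriv (\<lambda>x. F r ph pr x) pph"

definition poisson :: "phase_fun \<Rightarrow> phase_fun \<Rightarrow> phase_fun" where
  "poisson F G r ph pr pph =
     pd_r F r ph pr pph * pd_pr G r ph pr pph - pd_pr F r ph pr pph * pd_r G r ph pr pph
   + pd_phi F r ph pr pph * pd_pphi G r ph pr pph - pd_pphi F r ph pr pph * pd_phi G r ph pr pph"

definition H_na :: "real \<Rightarrow> real \<Rightarrow> real \<Rightarrow> real \<Rightarrow> phase_fun" where
  "H_na n k0 k1 k2 r ph pr pph =
     1/2 * r powr (2*n) * (pr^2 + pph^2 / r^2) + k0 / r powr (2*(n-1))
     + (1 / r powr (n-1)) * (k1 * cos ((n-1)*ph) + k2 * sin ((n-1)*ph))"

definition P1 :: "real \<Rightarrow> phase_fun" where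
  "P1 n r ph pr pph = r powr n * (pr * cos ((n-1)*ph) + (1/r) * pph * sin ((n-1)*ph))"

definition P2 :: "real \<Rightarrow> phase_fun" where
  "P2 n r ph pr pph = r powr n * (pr * sin ((n-1)*ph) - (1/r) * pph * cos ((n-1)*ph))"

definition J_a3 :: "real \<Rightarrow> real \<Rightarrow> real \<Rightarrow> real \<Rightarrow> phase_fun" where
  "J_a3 n k0 k1 k2 r ph pr pph = 2*k0*pph + k2 * P1 n r ph pr pph - k1 * P2 n r ph pr pph"

end

theory Submission imports Defs begin

text \<open>
  Split \<open>H = T + V\<close> with kinetic part \<open>T = (P\<^sub>1\<^sup>2 + P\<^sub>2\<^sup>2)/2\<close>. As \<open>P\<^sub>1, P\<^sub>2\<close> commute and
  \<open>T\<close> does not depend on \<open>\<phi>\<close>, \<open>J\<close> commutes with \<open>T\<close>. Put \<open>k = n - 1\<close>, so \<open>r\<^sup>n = r\<^sup>k\<^sup>+\<^sup>1\<close>.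
  The bracket of \<open>k\<^sub>2 P\<^sub>1 - k\<^sub>1 P\<^sub>2\<close> with \<open>r\<^sup>-\<^sup>k (k\<^sub>1 cos k\<phi> + k\<^sub>2 sin k\<phi>)\<close> vanishes, and its
  bracket with \<open>k\<^sub>0 r\<^sup>-\<^sup>2\<^sup>k\<close>, namely \<open>2 k k\<^sub>0 r\<^sup>-\<^sup>k (k\<^sub>2 cos k\<phi> - k\<^sub>1 sin k\<phi>)\<close>, is cancelled
  by the bracket of \<open>2 k\<^sub>0 p\<^sub>\<phi>\<close> with that angular potential. Once the partial
  derivatives are computed, both cancellations are polynomial identities that hold
  with \<open>r\<^sup>n\<close>, \<open>cos k\<phi>\<close>, \<open>sin k\<phi>\<close> treated as independent quantities.
\<close>

lemma powr_shifted_exponents: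
  fixes r n :: real
  assumes "r > 0"
  shows "r powr (2 * n) = (r powr n)\<^sup>2"
    and "r powr (n - 1) = r powr n / r"
    and "r powr (2 * n - 3) = (r powr n)\<^sup>2 / r ^ 3"
    and "r powr (n - 2) = r powr n / r\<^sup>2"
  using assms by (simp_all add: powr_diff power2_eq_square power3_eq_cube flip: powr_add)

lemma pd_r_J_a3:
  assumes "r > 0"
  shows "pd_r (J_a3 n k0 k1 k2) r ph pr pph =
    k2 * (n * r powr n / r * (pr * cos ((n-1)*ph) + pph * sin ((n-1)*ph) / r)
          - r powr n * pph * sin ((n-1)*ph) / r\<^sup>2)
  - k1 * (n * r powr n / r * (pr * sin ((n-1)*ph) - pph * cos ((n-1)*ph) / r)
          + r powr n * pph * cos ((n-1)*ph) / r\<^sup>2)"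
  unfolding pd_r_def J_a3_def P1_def P2_def
  using assms
  by (intro DERIV_imp_deriv)
     (auto intro!: derivative_eq_intros simp: powr_shifted_exponents field_simps power2_eq_square)

lemma pd_phi_J_a3:
  assumes "r > 0"
  shows "pd_phi (J_a3 n k0 k1 k2) r ph pr pph =
    k2 * r powr n * (n-1) * (pph * cos ((n-1)*ph) / r - pr * sin ((n-1)*ph))
  - k1 * r powr n * (n-1) * (pr * cos ((n-1)*ph) + pph * sin ((n-1)*ph) / r)"
  unfolding pd_phi_def J_a3_def P1_def P2_def
  using assms by (intro DERIV_imp_deriv) (auto intro!: derivative_eq_intros simp: field_simps)

lemma pd_pr_J_a3:
  "pd_pr (J_a3 n k0 k1 k2) r ph pr pph = r powr n * (k2 * cos ((n-1)*ph) - k1 * sin ((n-1)*ph))"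
  unfolding pd_pr_def J_a3_def P1_def P2_def
  by (intro DERIV_imp_deriv) (auto intro!: derivative_eq_intros simp: field_simps)

lemma pd_pphi_J_a3:
  assumes "r > 0"
  shows "pd_pphi (J_a3 n k0 k1 k2) r ph pr pph =
    2 * k0 + r powr n * (k2 * sin ((n-1)*ph) + k1 * cos ((n-1)*ph)) / r"
  unfolding pd_pphi_def J_a3_def P1_def P2_def
  using assms by (intro DERIV_imp_deriv) (auto intro!: derivative_eq_intros simp: field_simps)

lemma pd_r_H_na:
  assumes "r > 0"
  shows "pd_r (H_na n k0 k1 k2) r ph pr pph =
    (n * (r powr n)\<^sup>2 / r * (pr\<^sup>2 + pph\<^sup>2 / r\<^sup>2) - (r powr n)\<^sup>2 * pph\<^sup>2 / r ^ 3)
  + (- 2 * (n-1) * k0 * r / (r powr n)\<^sup>2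
     - (n-1) / r powr n * (k1 * cos ((n-1)*ph) + k2 * sin ((n-1)*ph)))"
  unfolding pd_r_def H_na_def
  using assms
  by (intro DERIV_imp_deriv, auto intro!: derivative_eq_intros, simp add: powr_shifted_exponents)
     (simp add: field_simps power2_eq_square power3_eq_cube eval_nat_numeral)

lemma pd_phi_H_na:
  assumes "r > 0"
  shows "pd_phi (H_na n k0 k1 k2) r ph pr pph =
    r / r powr n * (n-1) * (k2 * cos ((n-1)*ph) - k1 * sin ((n-1)*ph))"
  unfolding pd_phi_def H_na_def
  using assms
  by (intro DERIV_imp_deriv)
     (auto intro!: derivative_eq_intros simp: powr_shifted_exponents field_simps power2_eq_square)

lemma pd_pr_H_na:
  assumes "r > 0"
  shows "pd_pr (H_na n k0 k1 k2) r ph pr pph = (r powr n)\<^sup>2 * pr"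
  unfolding pd_pr_def H_na_def
  using assms
  by (intro DERIV_imp_deriv) (auto intro!: derivative_eq_intros simp: powr_shifted_exponents)

lemma pd_pphi_H_na:
  assumes "r > 0"
  shows "pd_pphi (H_na n k0 k1 k2) r ph pr pph = (r powr n)\<^sup>2 * pph / r\<^sup>2"
  unfolding pd_pphi_def H_na_def
  using assms
  by (intro DERIV_imp_deriv, auto intro!: derivative_eq_intros simp: powr_shifted_exponents)
     (simp_all add: field_simps power2_eq_square eval_nat_numeral)

lemma bracket_J_a3_H_na_vanishes:
  fixes r R c s pr pph n k0 k1 k2 :: real
  assumes "r > 0" "R > 0"
    and J_r: "J_r = k2 * (n * R / r * (pr * c + pph * s / r) - R * pph * s / r\<^sup>2)
                  - k1 * (n * R / r * (pr * s - pph * c / r) + R * pph * c / r\<^sup>2)"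
    and J_phi: "J_phi = k2 * R * (n-1) * (pph * c / r - pr * s) - k1 * R * (n-1) * (pr * c + pph * s / r)"
    and J_pr: "J_pr = R * (k2 * c - k1 * s)"
    and J_pphi: "J_pphi = 2 * k0 + R * (k2 * s + k1 * c) / r"
    and T_r: "T_r = n * R\<^sup>2 / r * (pr\<^sup>2 + pph\<^sup>2 / r\<^sup>2) - R\<^sup>2 * pph\<^sup>2 / r ^ 3"
    and V_r: "V_r = - 2 * (n-1) * k0 * r / R\<^sup>2 - (n-1) / R * (k1 * c + k2 * s)"
    and H_phi: "H_phi = r / R * (n-1) * (k2 * c - k1 * s)"
    and H_pr: "H_pr = R\<^sup>2 * pr"
    and H_pphi: "H_pphi = R\<^sup>2 * pph / r\<^sup>2"
  shows "J_r * H_pr - J_pr * (T_r + V_r) + J_phi * H_pphi - J_pphi * H_phi = 0"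
proof -
  have kinetic: "J_r * H_pr - J_pr * T_r + J_phi * H_pphi = 0"
    unfolding J_r J_pr J_phi T_r H_pr H_pphi
    using \<open>r > 0\<close> \<open>R > 0\<close> by (simp add: field_simps power2_eq_square power3_eq_cube)
  have potential: "J_pr * V_r + J_pphi * H_phi = 0"
    unfolding J_pr V_r J_pphi H_phi
    using \<open>r > 0\<close> \<open>R > 0\<close> by (simp add: field_simps power2_eq_square)
  show ?thesis
    using kinetic potential by (simp add: distrib_left)
qed

theorem mainTheorem3:
  fixes n k0 k1 k2 :: real
  assumes "n \<noteq> 1"
  shows "\<forall>r ph pr pph. r > 0 \<longrightarrow> poisson (J_a3 n k0 k1 k2) (H_na n k0 k1 k2) r ph pr pph = 0"
proof (intro allI impI)
  fix r ph pr pph :: real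
  assume r: "r > 0"
  have R: "r powr n > 0" using r by simp
  show "poisson (J_a3 n k0 k1 k2) (H_na n k0 k1 k2) r ph pr pph = 0"
    unfolding poisson_def pd_r_J_a3[OF r] pd_phi_J_a3[OF r] pd_pr_J_a3 pd_pphi_J_a3[OF r]
      pd_r_H_na[OF r] pd_phi_H_na[OF r] pd_pr_H_na[OF r] pd_pphi_H_na[OF r]
    by (rule bracket_J_a3_H_na_vanishes[OF r R]) (rule refl)+
qed

end
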